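(* Under the standing assumptions, $\dim F(\pi,\pi_0)\le |S^{0}(\pi)|$. Moreover, if $\dim F(\pi,\pi_0)=0$ then $|S^{0}(\pi)|=0$.
   Context: Let $n\ge 1$, $I=\{1,\dots,n\}$ and $X\subseteq\{0,1\}^n$. Standing assumptions: (a) the inequality $\pi^\top x\le \pi_0$ is valid for $X$ and supports $\mathrm{conv}(X)$, i.e. $\pi_0=\max_{x\in X}\pi^\top x$; (b) for every $i\in I$ there exist $x,x'\in X$ with $x_i=0$ and $x'_i=1$. The face is $F(\pi,\pi_0):=\{x\in\mathrm{conv}(X):\pi^\top x=\pi_0\}$. The disjunctive slack vector $\lambda(\pi)$ is defined by $\lambda^0_i(\pi):=\max_{x\in X}\{\pi^\top x: x_i=0\}$, $\lambda^1_i(\pi):=\max_{x\in X}\{\pi^\top x:x_i=1\}$, $\lambda_i(\pi):=\lambda^0_i(\pi)-\lambda^1_i(\pi)$; $S^{0}(\pi)=\{i\in I:\lambda_i(\pi)=0\}$. *)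

theory Defs
  imports "HOL-Analysis.Analysis"
begin

text \<open>Points of X are vectors in real^'n with 0/1 entries; coordinates are indexed by the
  finite type 'n (so I corresponds to UNIV :: 'n set and n = CARD('n) \<ge> 1).\<close>

definition binary_set :: "(real^'n) set \<Rightarrow> bool" where
  "binary_set X \<longleftrightarrow> (\<forall>x\<in>X. \<forall>i. x $ i = 0 \<or> x $ i = 1)"

definition face :: "(real^'n) set \<Rightarrow> real^'n \<Rightarrow> real \<Rightarrow> (real^'n) set" where
  "face X \<pi> \<pi>0 = {x \<in> convex hull X. \<pi> \<bullet> x = \<pi>0}"

definition lambda0 :: "(real^'n) set \<Rightarrow> real^'n \<Rightarrow> 'n \<Rightarrow> real" where
  "lambda0 X \<pi> i = Max {\<pi> \<bullet> x | x. x \<in> X \<and> x $ i = 0}"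

definition lambda1 :: "(real^'n) set \<Rightarrow> real^'n \<Rightarrow> 'n \<Rightarrow> real" where
  "lambda1 X \<pi> i = Max {\<pi> \<bullet> x | x. x \<in> X \<and> x $ i = 1}"

definition disj_slack :: "(real^'n) set \<Rightarrow> real^'n \<Rightarrow> 'n \<Rightarrow> real" where
  "disj_slack X \<pi> i = lambda0 X \<pi> i - lambda1 X \<pi> i"

definition S0 :: "(real^'n) set \<Rightarrow> real^'n \<Rightarrow> 'n set" where
  "S0 X \<pi> = {i. disj_slack X \<pi> i = 0}"

end

theory Submission
  imports Defs
begin

text \<open>The face is the convex hull of the tight points \<open>x \<in> X\<close> with \<open>\<pi> \<bullet> x = \<pi>0\<close>.
  For \<open>i \<notin> S0\<close> all tight points share their \<open>i\<close>-th coordinate: two tight points with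
  different binary \<open>i\<close>-th coordinates would force \<open>\<lambda>\<^sup>0\<^sub>i = \<lambda>\<^sup>1\<^sub>i = \<pi>0\<close>. Hence the face lies
  in an affine subspace in which only the coordinates in \<open>S0\<close> are free, giving the dimension
  bound. Conversely, for \<open>i \<in> S0\<close> the common value of \<open>\<lambda>\<^sup>0\<^sub>i\<close> and \<open>\<lambda>\<^sup>1\<^sub>i\<close> is \<open>\<pi>0\<close>, since a
  tight point attains one of them; so the face contains two tight points differing in
  coordinate \<open>i\<close> and is not a single point.\<close>

lemma finite_binary_set:
  fixes X :: "(real^'n) set"
  assumes "binary_set X"
  shows "finite X"
proof -
  have "X \<subseteq> range (\<lambda>f::'n \<Rightarrow> bool. \<chi> i. if f i then 1 else 0)"
  proof
    fix x assume "x \<in> X"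
    then have "\<forall>i. x $ i = 0 \<or> x $ i = 1"
      using assms unfolding binary_set_def by blast
    then have "x = (\<chi> i. if x $ i = 1 then 1 else 0)"
      by (auto simp: vec_eq_iff)
    then show "x \<in> range (\<lambda>f::'n \<Rightarrow> bool. \<chi> i. if f i then 1 else 0)"
      by (intro image_eqI[where x = "\<lambda>i. x $ i = 1"]) auto
  qed
  then show ?thesis
    by (rule finite_subset) simp
qed

lemma Max_inner_ge:
  assumes "finite X" "y \<in> X" "P y"
  shows "\<pi> \<bullet> y \<le> Max {\<pi> \<bullet> x | x. x \<in> X \<and> P x}"
  using assms by (intro Max_ge) auto

lemma Max_inner_attained:
  assumes "finite X" "\<exists>x\<in>X. P x"
  obtains x where "x \<in> X" "P x" "\<pi> \<bullet> x = Max {\<pi> \<bullet> x | x. x \<in> X \<and> P x}"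
proof -
  have "Max {\<pi> \<bullet> x | x. x \<in> X \<and> P x} \<in> {\<pi> \<bullet> x | x. x \<in> X \<and> P x}"
    using assms by (intro Max_in) auto
  then show ?thesis
    using that by auto
qed

lemma face_eq_convex_hull_tight:
  fixes X :: "(real^'n) set"
  assumes "finite X" and valid: "\<forall>y\<in>X. \<pi> \<bullet> y \<le> \<pi>0"
  shows "face X \<pi> \<pi>0 = convex hull {x \<in> X. \<pi> \<bullet> x = \<pi>0}"
proof
  have "\<forall>y\<in>convex hull X. \<pi> \<bullet> y \<le> \<pi>0"
    using hull_minimal[of X "{y. \<pi> \<bullet> y \<le> \<pi>0}" convex] valid
    by (auto simp: convex_halfspace_le)
  then have "face X \<pi> \<pi>0 face_of convex hull X"
    unfolding face_def using face_of_Int_supporting_hyperplane_le[of "convex hull X" \<pi> \<pi>0]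
    by (simp add: Int_def)
  then obtain T where T: "T \<subseteq> X" "face X \<pi> \<pi>0 = convex hull T"
    by (rule face_of_convex_hull_subset[OF finite_imp_compact[OF \<open>finite X\<close>]])
  then have "T \<subseteq> {x \<in> X. \<pi> \<bullet> x = \<pi>0}"
    using hull_subset[of T convex] unfolding face_def by auto
  then show "face X \<pi> \<pi>0 \<subseteq> convex hull {x \<in> X. \<pi> \<bullet> x = \<pi>0}"
    unfolding T(2) by (rule hull_mono)
next
  have "convex hull {x \<in> X. \<pi> \<bullet> x = \<pi>0} \<subseteq> {x. \<pi> \<bullet> x = \<pi>0}"
    by (intro hull_minimal) (auto simp: convex_hyperplane)
  moreover have "convex hull {x \<in> X. \<pi> \<bullet> x = \<pi>0} \<subseteq> convex hull X"
    by (intro hull_mono) auto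
  ultimately show "convex hull {x \<in> X. \<pi> \<bullet> x = \<pi>0} \<subseteq> face X \<pi> \<pi>0"
    unfolding face_def by auto
qed

lemma convex_fixed_coordinates: "convex {x :: real^'n. \<forall>i. i \<notin> J \<longrightarrow> x $ i = c $ i}"
proof (rule convex_box_cart)
  fix i show "convex {v :: real. i \<notin> J \<longrightarrow> v = c $ i}"
    by (cases "i \<in> J") simp_all
qed

lemma aff_dim_le_card_free_coordinates:
  fixes S :: "(real^'n) set"
  assumes "S \<subseteq> {x. \<forall>i. i \<notin> J \<longrightarrow> x $ i = c $ i}"
  shows "aff_dim S \<le> int (card J)"
proof -
  define B where "B = (\<lambda>i. axis i (1::real)) ` J"
  have "(\<lambda>x. x - c) ` S \<subseteq> span B"
  proof
    fix z assume "z \<in> (\<lambda>x. x - c) ` S"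
    then have z0: "z $ i = 0" if "i \<notin> J" for i
      using assms that by auto
    have "z = (\<Sum>i\<in>UNIV. z $ i *\<^sub>R axis i 1)"
      using basis_expansion[of z] by (simp add: scalar_mult_eq_scaleR)
    also have "\<dots> = (\<Sum>i\<in>J. z $ i *\<^sub>R axis i 1)"
      by (rule sum.mono_neutral_right) (auto simp: z0)
    also have "\<dots> \<in> span B"
      by (intro span_sum span_mul span_base) (auto simp: B_def)
    finally show "z \<in> span B" .
  qed
  then have "aff_dim ((\<lambda>x. x - c) ` S) \<le> aff_dim (span B)"
    by (rule aff_dim_subset)
  also have "\<dots> \<le> int (card B)"
    by (simp add: aff_dim_subspace dim_le_card' B_def)
  also have "\<dots> \<le> int (card J)"
    unfolding B_def by (simp add: card_image_le)
  finally show ?thesis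
    by (simp add: aff_dim_translation_eq_subtract)
qed

context
  fixes X :: "(real^'n) set" and \<pi> :: "real^'n" and \<pi>0 :: real
  assumes fin: "finite X" and valid: "\<forall>y\<in>X. \<pi> \<bullet> y \<le> \<pi>0"
begin

lemma Max_inner_eq_iff_tight:
  assumes "\<exists>x\<in>X. P x"
  shows "Max {\<pi> \<bullet> x | x. x \<in> X \<and> P x} = \<pi>0 \<longleftrightarrow> (\<exists>x\<in>X. P x \<and> \<pi> \<bullet> x = \<pi>0)"
proof -
  obtain x where x: "x \<in> X" "P x" "\<pi> \<bullet> x = Max {\<pi> \<bullet> x | x. x \<in> X \<and> P x}"
    using fin assms by (rule Max_inner_attained)
  have "\<pi>0 \<le> Max {\<pi> \<bullet> x | x. x \<in> X \<and> P x}" if "\<exists>y\<in>X. P y \<and> \<pi> \<bullet> y = \<pi>0"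
    using that Max_inner_ge[OF fin] by blast
  then show ?thesis
    using x valid by force
qed

lemma lambda0_eq_iff_tight:
  "\<exists>x\<in>X. x $ i = 0 \<Longrightarrow> lambda0 X \<pi> i = \<pi>0 \<longleftrightarrow> (\<exists>x\<in>X. x $ i = 0 \<and> \<pi> \<bullet> x = \<pi>0)"
  unfolding lambda0_def by (rule Max_inner_eq_iff_tight)

lemma lambda1_eq_iff_tight:
  "\<exists>x\<in>X. x $ i = 1 \<Longrightarrow> lambda1 X \<pi> i = \<pi>0 \<longleftrightarrow> (\<exists>x\<in>X. x $ i = 1 \<and> \<pi> \<bullet> x = \<pi>0)"
  unfolding lambda1_def by (rule Max_inner_eq_iff_tight)

lemma tight_coordinate_eq:
  assumes bin: "binary_set X"
    and "i \<notin> S0 X \<pi>" "x \<in> X" "y \<in> X" "\<pi> \<bullet> x = \<pi>0" "\<pi> \<bullet> y = \<pi>0"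
  shows "x $ i = y $ i"
proof (rule ccontr)
  assume "x $ i \<noteq> y $ i"
  moreover have "x $ i = 0 \<or> x $ i = 1" "y $ i = 0 \<or> y $ i = 1"
    using bin assms(3,4) unfolding binary_set_def by blast+
  ultimately have "\<exists>u\<in>X. u $ i = 0 \<and> \<pi> \<bullet> u = \<pi>0" "\<exists>v\<in>X. v $ i = 1 \<and> \<pi> \<bullet> v = \<pi>0"
    using assms(3-6) by auto
  then have "lambda0 X \<pi> i = \<pi>0" "lambda1 X \<pi> i = \<pi>0"
    using lambda0_eq_iff_tight lambda1_eq_iff_tight by blast+
  then show False
    using assms(2) unfolding S0_def disj_slack_def by simp
qed

lemma S0_tight_points_differ:
  assumes bin: "binary_set X"
    and "i \<in> S0 X \<pi>" "xs \<in> X" "\<pi> \<bullet> xs = \<pi>0"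
    and ex0: "\<exists>x\<in>X. x $ i = 0" and ex1: "\<exists>x\<in>X. x $ i = 1"
  shows "\<exists>x0\<in>X. x0 $ i = 0 \<and> \<pi> \<bullet> x0 = \<pi>0" "\<exists>x1\<in>X. x1 $ i = 1 \<and> \<pi> \<bullet> x1 = \<pi>0"
proof -
  have "lambda0 X \<pi> i = lambda1 X \<pi> i"
    using assms(2) unfolding S0_def disj_slack_def by simp
  moreover have "xs $ i = 0 \<or> xs $ i = 1"
    using bin assms(3) unfolding binary_set_def by blast
  ultimately have "lambda0 X \<pi> i = \<pi>0" "lambda1 X \<pi> i = \<pi>0"
    using lambda0_eq_iff_tight[OF ex0] lambda1_eq_iff_tight[OF ex1] assms(3,4) by auto
  then show "\<exists>x0\<in>X. x0 $ i = 0 \<and> \<pi> \<bullet> x0 = \<pi>0" "\<exists>x1\<in>X. x1 $ i = 1 \<and> \<pi> \<bullet> x1 = \<pi>0"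
    using lambda0_eq_iff_tight[OF ex0] lambda1_eq_iff_tight[OF ex1] by simp_all
qed

end

theorem lemma2:
  fixes X :: "(real^'n) set" and \<pi> :: "real^'n" and \<pi>0 :: real
  assumes bin: "binary_set X"
    and supp: "\<pi>0 = Max ((\<lambda>x. \<pi> \<bullet> x) ` X)"
    and nontriv: "\<forall>i. (\<exists>x\<in>X. x $ i = 0) \<and> (\<exists>x'\<in>X. x' $ i = 1)"
  shows "aff_dim (face X \<pi> \<pi>0) \<le> int (card (S0 X \<pi>))
    \<and> (aff_dim (face X \<pi> \<pi>0) = 0 \<longrightarrow> card (S0 X \<pi>) = 0)"
proof
  have finX: "finite X" and "X \<noteq> {}"
    using bin nontriv finite_binary_set by blast+
  then have valid: "\<forall>y\<in>X. \<pi> \<bullet> y \<le> \<pi>0" and "\<pi>0 \<in> (\<lambda>x. \<pi> \<bullet> x) ` X"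
    using supp by auto
  then obtain xs where xs: "xs \<in> X" "\<pi> \<bullet> xs = \<pi>0" by auto
  have face: "face X \<pi> \<pi>0 = convex hull {x \<in> X. \<pi> \<bullet> x = \<pi>0}"
    using face_eq_convex_hull_tight[OF finX valid] .
  have "{x \<in> X. \<pi> \<bullet> x = \<pi>0} \<subseteq> {x. \<forall>i. i \<notin> S0 X \<pi> \<longrightarrow> x $ i = xs $ i}"
    using tight_coordinate_eq[OF finX valid bin _ _ xs(1) _ xs(2)] by blast
  then have "face X \<pi> \<pi>0 \<subseteq> {x. \<forall>i. i \<notin> S0 X \<pi> \<longrightarrow> x $ i = xs $ i}"
    unfolding face using convex_fixed_coordinates by (rule hull_minimal)
  then show "aff_dim (face X \<pi> \<pi>0) \<le> int (card (S0 X \<pi>))"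
    by (rule aff_dim_le_card_free_coordinates)
  show "aff_dim (face X \<pi> \<pi>0) = 0 \<longrightarrow> card (S0 X \<pi>) = 0"
  proof
    assume "aff_dim (face X \<pi> \<pi>0) = 0"
    then obtain p where p: "face X \<pi> \<pi>0 = {p}"
      using aff_dim_eq_0 by blast
    have "S0 X \<pi> = {}"
    proof (rule equals0I)
      fix i assume "i \<in> S0 X \<pi>"
      then obtain x0 x1 where "x0 \<in> X" "x0 $ i = 0" "\<pi> \<bullet> x0 = \<pi>0"
        and "x1 \<in> X" "x1 $ i = 1" "\<pi> \<bullet> x1 = \<pi>0"
        using S0_tight_points_differ[OF finX valid bin _ xs] nontriv by meson
      then have "x0 \<in> face X \<pi> \<pi>0" "x1 \<in> face X \<pi> \<pi>0" "x0 \<noteq> x1"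
        unfolding face by (auto intro: hull_inc)
      then show False
        using p by simp
    qed
    then show "card (S0 X \<pi>) = 0"
      by simp
  qed
qed

end
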